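(* Let $n\geq1$ and $\eta\in\Omega$. Then the set of vectors $\overline{T_\eta}\subset\mathbb C^{\lambda_{2,n}}$ is linearly independent.
   Context: $n\geq1$ is fixed. $\Lambda_{2,n}=\{\alpha\in\mathbb N^2:1\leq\alpha_1+\alpha_2\leq n\}$, $\lambda_{2,n}=|\Lambda_{2,n}|$; for $v\in\mathbb N^2$, $\bar v=\big(\binom{v_1}{\alpha_1}\binom{v_2}{\alpha_2}\big)_{\alpha\in\Lambda_{2,n}}\in\mathbb C^{\lambda_{2,n}}$. $\Omega$ is the set of sequences $\eta=(z,d_0,d_1,\ldots,d_r)$ with $z\in\{0,1\}$, $d_0=0$, $d_i\in\mathbb N\setminus\{0\}$ for $1\leq i\leq r$, and $\sum_{i=0}^r d_i=n$. For $j\in\{1,\ldots,n\}$ let $t\in\{1,\ldots,r\}$ be the unique index with $\sum_{i=0}^{t-1}d_i<j\leq\sum_{i=0}^t d_i$ and $c=j-\sum_{i=0}^{t-1}d_i$; define $v_{j,\eta}=(\sum_{i\text{ odd},i<t}d_i+c,0)$ if $z=1,t$ odd; $(0,\sum_{i\text{ even},i<t}d_i+c)$ if $z=1,t$ even; $(0,\sum_{i\text{ odd},i<t}d_i+c)$ if $z=0,t$ odd; $(\sum_{i\text{ even},i<t}d_i+c,0)$ if $z=0,t$ even. Set $T_{j,\eta}=\{v_{j,\eta}+p(1,1):0\leq p\leq n-j\}$ for $1\leq j\leq n$, $T_{0,\eta}=\{(p,p):1\leq p\leq n\}$, $T_\eta=\bigcup_{j=0}^nT_{j,\eta}$ and $\overline{T_\eta}=\{\bar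 v:v\in T_\eta\}$. *)

theory Defs
  imports Complex_Main "HOL-Library.Function_Algebras"
begin

definition Lam :: "nat \<Rightarrow> (nat \<times> nat) set" where
  "Lam n = {a. 1 \<le> fst a + snd a \<and> fst a + snd a \<le> n}"

text \<open>The vector bar v in C^{Lambda_{2,n}}, represented as a function on N^2
  that vanishes outside Lambda_{2,n}.\<close>
definition vbar :: "nat \<Rightarrow> nat \<times> nat \<Rightarrow> (nat \<times> nat \<Rightarrow> complex)" where
  "vbar n v = (\<lambda>a. if a \<in> Lam n then of_nat ((fst v choose fst a) * (snd v choose snd a)) else 0)"

definition Omega :: "nat \<Rightarrow> (nat \<times> nat list) set" where
  "Omega n = {(z, ds). z \<in> {0, 1} \<and> ds \<noteq> [] \<and> ds ! 0 = 0 \<and>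
      (\<forall>i\<in>{1..<length ds}. 0 < ds ! i) \<and> sum_list ds = n}"

definition psum :: "nat list \<Rightarrow> nat \<Rightarrow> nat" where
  "psum ds k = (\<Sum>i<k. ds ! i)"

definition tidx :: "nat list \<Rightarrow> nat \<Rightarrow> nat" where
  "tidx ds j = (THE t. 1 \<le> t \<and> t \<le> length ds - 1 \<and> psum ds t < j \<and> j \<le> psum ds (Suc t))"

definition vvec :: "nat \<Rightarrow> nat list \<Rightarrow> nat \<Rightarrow> nat \<times> nat" where
  "vvec z ds j = (let t = tidx ds j; c = j - psum ds t;
      so = (\<Sum>i\<in>{i. i < t \<and> odd i}. ds ! i);
      se = (\<Sum>i\<in>{i. i < t \<and> even i}. ds ! i) in
     if z = 1 then (if odd t then (so + c, 0) else (0, se + c))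
     else (if odd t then (0, so + c) else (se + c, 0)))"

definition Tj :: "nat \<Rightarrow> nat \<times> nat list \<Rightarrow> nat \<Rightarrow> (nat \<times> nat) set" where
  "Tj n eta j = (if j = 0 then {(p, p) | p. 1 \<le> p \<and> p \<le> n}
     else {(fst (vvec (fst eta) (snd eta) j) + p, snd (vvec (fst eta) (snd eta) j) + p) | p. p \<le> n - j})"

definition Teta :: "nat \<Rightarrow> nat \<times> nat list \<Rightarrow> (nat \<times> nat) set" where
  "Teta n eta = (\<Union>j\<in>{0..n}. Tj n eta j)"

definition Tbar :: "nat \<Rightarrow> nat \<times> nat list \<Rightarrow> (nat \<times> nat \<Rightarrow> complex) set" where
  "Tbar n eta = vbar n ` Teta n eta"

end

(*
  The points of T_eta lie on the n + 1 diagonal lines {b_j + p(1,1)}, where b_0 = (0,0) and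
  b_j = v_{j,eta}; line j carries the n - j + 1 points with p <= n - j (on line 0 all but b_0
  itself). The lines are distinct: the offset x - y of v_{j,eta} is plus or minus its nonzero
  coordinate, and that coordinate increases strictly with j among the j of equal sign.

  Together with (0,0), these (n+1)(n+2)/2 points are unisolvent for the polynomials of degree
  at most n. For a point on line j, multiplying the linear forms x - y - (offset of line i) for
  i < j with the Lagrange factors of line j gives a polynomial of degree n that vanishes at all
  other points of lines 0..j. Hence, by descending induction on j, every weight on the points
  that is orthogonal to all polynomials of degree at most n vanishes.

  A linear dependence among the vectors v-bar is such a weight: v-bar lists the values at v of
  the binomial basis (x choose a)(y choose b) of those polynomials, except the constant one,
  which is restored by a suitable weight at (0,0).
*)

theory Submission
  imports Defs
begin

inductive_set poly2 :: "nat \<Rightarrow> (nat \<times> nat \<Rightarrow> 'a::comm_ring_1) set" for d where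
  binomial: "a + b \<le> d \<Longrightarrow> (\<lambda>v. of_nat (fst v choose a) * of_nat (snd v choose b)) \<in> poly2 d"
| add: "f \<in> poly2 d \<Longrightarrow> g \<in> poly2 d \<Longrightarrow> (\<lambda>v. f v + g v) \<in> poly2 d"
| scale: "f \<in> poly2 d \<Longrightarrow> (\<lambda>v. c * f v) \<in> poly2 d"

lemma poly2_mono: "f \<in> poly2 d \<Longrightarrow> d \<le> e \<Longrightarrow> f \<in> poly2 e"
proof (induction rule: poly2.induct)
  case (binomial a b)
  then show ?case by (intro poly2.binomial) simp
qed (simp_all add: poly2.add poly2.scale)

lemma poly2_const: "(\<lambda>v. c) \<in> poly2 d"
  using poly2.scale[OF poly2.binomial[of 0 0 d], of c] by simp

lemma poly2_swap: "f \<in> poly2 d \<Longrightarrow> (\<lambda>v. f (prod.swap v)) \<in> poly2 d"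
proof (induction rule: poly2.induct)
  case (binomial a b)
  then show ?case
    using poly2.binomial[of b a d] by (simp add: mult.commute)
qed (simp_all add: poly2.add poly2.scale)

lemma times_binomial: "x * (x choose a) = Suc a * (x choose Suc a) + a * (x choose a)"
proof (cases "a \<le> x")
  case True
  have "Suc a * (x choose Suc a) = (x - a) * (x choose a)"
    by (metis binomial_absorption binomial_absorb_comp)
  then show ?thesis using True by (simp add: algebra_simps)
qed (simp add: binomial_eq_0)

lemma poly2_mult_fst: "f \<in> poly2 d \<Longrightarrow> (\<lambda>v. of_nat (fst v) * f v) \<in> poly2 (Suc d)"
proof (induction rule: poly2.induct)
  case (binomial a b)
  let ?m = "\<lambda>a b (v :: nat \<times> nat). of_nat (fst v choose a) * of_nat (snd v choose b) :: 'a"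
  have "(\<lambda>v. of_nat (fst v) * ?m a b v) = (\<lambda>v. of_nat (Suc a) * ?m (Suc a) b v + of_nat a * ?m a b v)"
  proof
    fix v :: "nat \<times> nat"
    have nat_eq: "fst v * ((fst v choose a) * (snd v choose b))
        = Suc a * ((fst v choose Suc a) * (snd v choose b)) + a * ((fst v choose a) * (snd v choose b))"
      using arg_cong[OF times_binomial[of "fst v" a], of "\<lambda>z. z * (snd v choose b)"]
      by (simp add: algebra_simps)
    show "of_nat (fst v) * ?m a b v = of_nat (Suc a) * ?m (Suc a) b v + of_nat a * ?m a b v"
      using arg_cong[OF nat_eq, of "of_nat :: nat \<Rightarrow> 'a"] by (simp add: algebra_simps)
  qed
  moreover have "(\<lambda>v. of_nat (Suc a) * ?m (Suc a) b v + of_nat a * ?m a b v) \<in> poly2 (Suc d)"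
    using binomial by (intro poly2.intros) auto
  ultimately show ?case by simp
next
  case (add f g)
  then show ?case using poly2.add[OF add.IH] by (simp add: distrib_left)
next
  case (scale f c)
  then show ?case using poly2.scale[OF scale.IH, of c] by (simp add: mult.left_commute)
qed

lemma poly2_mult_snd: "f \<in> poly2 d \<Longrightarrow> (\<lambda>v. of_nat (snd v) * f v) \<in> poly2 (Suc d)"
  using poly2_swap[OF poly2_mult_fst[OF poly2_swap[of f d]]] by simp

lemma poly2_mult_affine:
  assumes "f \<in> poly2 d"
  shows "(\<lambda>v. (\<alpha> * of_nat (fst v) + \<beta> * of_nat (snd v) + \<gamma>) * f v) \<in> poly2 (Suc d)"
proof -
  have "(\<lambda>v. \<alpha> * (of_nat (fst v) * f v) + \<beta> * (of_nat (snd v) * f v) + \<gamma> * f v) \<in> poly2 (Suc d)"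
    using poly2_mult_fst[OF assms] poly2_mult_snd[OF assms] poly2_mono[OF assms, of "Suc d"]
    by (intro poly2.add poly2.scale) auto
  then show ?thesis by (simp add: algebra_simps)
qed

lemma poly2_prod_affine:
  assumes "finite I" and "f \<in> poly2 d"
  shows "(\<lambda>v. (\<Prod>i\<in>I. \<alpha> i * of_nat (fst v) + \<beta> i * of_nat (snd v) + \<gamma> i) * f v) \<in> poly2 (card I + d)"
  using assms(1)
proof (induction I rule: finite_induct)
  case empty
  then show ?case using assms(2) by simp
next
  case (insert i I)
  then show ?case using poly2_mult_affine[OF insert.IH, of "\<alpha> i" "\<beta> i" "\<gamma> i"]
    by (simp add: mult.assoc)
qed

definition orthogonal_poly2 :: "nat \<Rightarrow> (nat \<times> nat) set \<Rightarrow> (nat \<times> nat \<Rightarrow> 'a::comm_ring_1) \<Rightarrow> bool"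
  where "orthogonal_poly2 d A w \<longleftrightarrow>
    (\<forall>a b. a + b \<le> d \<longrightarrow> (\<Sum>v\<in>A. w v * (of_nat (fst v choose a) * of_nat (snd v choose b))) = 0)"

lemma sum_poly2_eq_0:
  assumes "orthogonal_poly2 d A w" and "f \<in> poly2 d"
  shows "(\<Sum>v\<in>A. w v * f v) = 0"
  using assms(2)
proof (induction rule: poly2.induct)
  case (scale f c)
  have "(\<Sum>v\<in>A. w v * (c * f v)) = c * (\<Sum>v\<in>A. w v * f v)"
    by (simp add: sum_distrib_left mult.left_commute)
  then show ?case using scale by simp
qed (use assms(1) in \<open>simp_all add: orthogonal_poly2_def distrib_left sum.distrib\<close>)

lemma psum_mono: "k \<le> k' \<Longrightarrow> psum ds k \<le> psum ds k'"
  unfolding psum_def by (rule sum_mono2) auto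

lemma psum_Suc: "psum ds (Suc k) = psum ds k + ds ! k"
  by (simp add: psum_def)

lemma tidx_eqI:
  assumes "1 \<le> t" "t \<le> length ds - 1" "psum ds t < j" "j \<le> psum ds (Suc t)"
  shows "tidx ds j = t"
  unfolding tidx_def
proof (rule the_equality)
  fix t' assume t': "1 \<le> t' \<and> t' \<le> length ds - 1 \<and> psum ds t' < j \<and> j \<le> psum ds (Suc t')"
  have "\<not> Suc t' \<le> t" using psum_mono[of "Suc t'" t ds] t' assms by auto
  moreover have "\<not> Suc t \<le> t'" using psum_mono[of "Suc t" t' ds] t' assms by auto
  ultimately show "t' = t" by linarith
qed (use assms in simp)

lemma tidx_bounds:
  assumes "ds ! 0 = 0" and "sum_list ds = n" and "1 \<le> j" and "j \<le> n"
  shows "1 \<le> tidx ds j" "tidx ds j \<le> length ds - 1"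
    and "psum ds (tidx ds j) < j" "j \<le> psum ds (Suc (tidx ds j))"
proof -
  have "psum ds (length ds) = n"
    using assms(2) by (simp add: psum_def sum_list_sum_nth atLeast0LessThan)
  then have ex: "j \<le> psum ds (length ds)" using assms(4) by simp
  define k where "k = (LEAST k. j \<le> psum ds k)"
  have jk: "j \<le> psum ds k" unfolding k_def by (rule LeastI[of "\<lambda>k. j \<le> psum ds k", OF ex])
  have k_le: "k \<le> length ds" unfolding k_def by (rule Least_le[of "\<lambda>k. j \<le> psum ds k", OF ex])
  have below: "psum ds (k - 1) < j"
    using not_less_Least[of "k - 1" "\<lambda>k. j \<le> psum ds k"] jk assms(3) unfolding k_def[symmetric]
    by (cases k) (auto simp: psum_def)
  have "psum ds 1 = 0" using assms(1) by (simp add: psum_def)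
  then have "2 \<le> k" using jk assms(3) psum_mono[of k 1 ds] by (cases "k \<le> 1") auto
  then have "tidx ds j = k - 1" using jk k_le below by (intro tidx_eqI) auto
  then show "1 \<le> tidx ds j" "tidx ds j \<le> length ds - 1"
    and "psum ds (tidx ds j) < j" "j \<le> psum ds (Suc (tidx ds j))"
    using \<open>2 \<le> k\<close> jk k_le below by (simp_all add: Suc_diff_1)
qed

lemma tidx_mono:
  assumes "ds ! 0 = 0" and "sum_list ds = n" and "1 \<le> j" and "j \<le> j'" and "j' \<le> n"
  shows "tidx ds j \<le> tidx ds j'"
proof (rule ccontr)
  assume "\<not> ?thesis"
  then have "psum ds (Suc (tidx ds j')) \<le> psum ds (tidx ds j)" by (intro psum_mono) simp
  then show False using tidx_bounds[OF assms(1,2), of j] tidx_bounds[OF assms(1,2), of j'] assms(3-5)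
    by simp
qed

definition vlen :: "nat list \<Rightarrow> nat \<Rightarrow> nat" where
  "vlen ds j = (let t = tidx ds j in (\<Sum>i | i < t \<and> even i = even t. ds ! i) + (j - psum ds t))"

lemma vvec_eq:
  "vvec z ds j = (if odd (tidx ds j) = (z = 1) then (vlen ds j, 0) else (0, vlen ds j))"
  unfolding vvec_def vlen_def Let_def by auto

lemma vlen_pos:
  assumes "ds ! 0 = 0" and "sum_list ds = n" and "1 \<le> j" and "j \<le> n"
  shows "1 \<le> vlen ds j"
  using tidx_bounds(3)[OF assms] unfolding vlen_def Let_def by simp

lemma vlen_less:
  assumes "ds ! 0 = 0" and "sum_list ds = n" and "1 \<le> j" and "j < j'" and "j' \<le> n"
    and par: "even (tidx ds j) = even (tidx ds j')"
  shows "vlen ds j < vlen ds j'"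
proof -
  define t t' where "t = tidx ds j" and "t' = tidx ds j'"
  define S where "S = (\<lambda>t. \<Sum>i | i < t \<and> even i = even t. ds ! i)"
  have t_le: "t \<le> t'" unfolding t_def t'_def using tidx_mono[OF assms(1-3) _ assms(5)] assms(4) by simp
  have "j \<le> n" using assms(4,5) by simp
  then have j: "psum ds t < j" "j \<le> psum ds t + ds ! t"
    using tidx_bounds[OF assms(1-3)] psum_Suc[of ds t] unfolding t_def by simp_all
  have j': "psum ds t' < j'"
    using tidx_bounds[OF assms(1,2) _ assms(5)] assms(3,4) unfolding t'_def by simp
  have vl: "vlen ds j = S t + (j - psum ds t)" "vlen ds j' = S t' + (j' - psum ds t')"
    unfolding vlen_def Let_def S_def t_def t'_def by simp_all
  show ?thesis
  proof (cases "t = t'")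
    case True
    then show ?thesis using vl j j' assms(4) by simp
  next
    case False
    have "S t + ds ! t = (\<Sum>i \<in> insert t {i. i < t \<and> even i = even t}. ds ! i)"
      unfolding S_def by simp
    also have "\<dots> \<le> S t'"
      unfolding S_def using par False t_le by (intro sum_mono2) (auto simp: t_def t'_def)
    finally show ?thesis using vl j j' by simp
  qed
qed

definition diag :: "nat \<times> nat \<Rightarrow> int" where
  "diag v = int (fst v) - int (snd v)"

definition diag_shift :: "nat \<times> nat \<Rightarrow> nat \<Rightarrow> nat \<times> nat" where
  "diag_shift b p = (fst b + p, snd b + p)"

definition staircase :: "(nat \<Rightarrow> nat \<times> nat) \<Rightarrow> nat \<Rightarrow> (nat \<times> nat) set" where
  "staircase B n = {diag_shift (B j) p | j p. j \<le> n \<and> p \<le> n - j}"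

lemma diag_diag_shift [simp]: "diag (diag_shift b p) = diag b"
  by (simp add: diag_def diag_shift_def)

lemma separating_poly2:
  fixes B :: "nat \<Rightarrow> nat \<times> nat"
  assumes inj: "inj_on (diag \<circ> B) {..n}" and "j \<le> n" and "p \<le> n - j"
  obtains F :: "nat \<times> nat \<Rightarrow> 'a::field_char_0"
  where "F \<in> poly2 n" and "F (diag_shift (B j) p) \<noteq> 0"
    and "\<And>i q. i < j \<Longrightarrow> F (diag_shift (B i) q) = 0"
    and "\<And>q. q \<le> n - j \<Longrightarrow> q \<noteq> p \<Longrightarrow> F (diag_shift (B j) q) = 0"
proof
  let ?Q = "{..n - j} - {p}"
  define F :: "nat \<times> nat \<Rightarrow> 'a" where "F = (\<lambda>v.
    (\<Prod>i<j. of_int (diag v - diag (B i))) * (\<Prod>q\<in>?Q. of_nat (fst v) - of_nat (fst (B j) + q)))"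
  have "(\<lambda>v. (\<Prod>i<j. 1 * of_nat (fst v) + (-1) * of_nat (snd v) + (- of_int (diag (B i)))) *
      ((\<Prod>q\<in>?Q. 1 * of_nat (fst v) + 0 * of_nat (snd v) + (- of_nat (fst (B j) + q))) * 1) :: 'a)
      \<in> poly2 (card {..<j} + (card ?Q + 0))"
    by (intro poly2_prod_affine poly2_const) auto
  moreover have "card {..<j} + (card ?Q + 0) = n" using assms(2,3) by (simp add: card_Diff_singleton)
  ultimately show "F \<in> poly2 n" by (simp add: F_def diag_def algebra_simps)
  show "F (diag_shift (B i) q) = 0" if "i < j" for i q
    using that by (auto simp: F_def)
  show "F (diag_shift (B j) q) = 0" if "q \<le> n - j" "q \<noteq> p" for q
    using that by (auto simp: F_def diag_shift_def)
  have "diag (B j) \<noteq> diag (B i)" if "i < j" for i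
    using inj_onD[OF inj, of i j] that assms(2) by auto
  then have "(\<Prod>i<j. of_int (diag (diag_shift (B j) p) - diag (B i)) :: 'a) \<noteq> 0"
    by simp
  moreover have "(\<Prod>q\<in>?Q. of_nat (fst (diag_shift (B j) p)) - of_nat (fst (B j) + q) :: 'a) \<noteq> 0"
    by (auto simp: diag_shift_def)
  ultimately show "F (diag_shift (B j) p) \<noteq> 0" by (simp add: F_def)
qed

lemma staircase_unisolvent:
  fixes w :: "nat \<times> nat \<Rightarrow> 'a::field_char_0"
  assumes inj: "inj_on (diag \<circ> B) {..n}" and A: "finite A" "A \<subseteq> staircase B n"
    and orth: "orthogonal_poly2 n A w" and "v \<in> A"
  shows "w v = 0"
proof -
  have "w (diag_shift (B j) p) = 0" if "j \<le> n" "p \<le> n - j" "diag_shift (B j) p \<in> A" for j p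
    using that
  proof (induction "n - j" arbitrary: j p rule: less_induct)
    case less
    obtain F :: "nat \<times> nat \<Rightarrow> 'a" where F: "F \<in> poly2 n" "F (diag_shift (B j) p) \<noteq> 0"
      and F_lower: "\<And>i q. i < j \<Longrightarrow> F (diag_shift (B i) q) = 0"
      and F_same: "\<And>q. q \<le> n - j \<Longrightarrow> q \<noteq> p \<Longrightarrow> F (diag_shift (B j) q) = 0"
      using separating_poly2[OF inj less.prems(1,2)] by blast
    have "(\<Sum>v\<in>A - {diag_shift (B j) p}. w v * F v) = 0"
    proof (rule sum.neutral, rule ballI)
      fix v assume v_other: "v \<in> A - {diag_shift (B j) p}"
      obtain i q where v: "v = diag_shift (B i) q" "i \<le> n" "q \<le> n - i"
        using v_other A(2) unfolding staircase_def by blast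
      consider "i < j" | "j < i" | "i = j" by linarith
      then show "w v * F v = 0"
      proof cases
        case 1
        then show ?thesis using F_lower v by simp
      next
        case 2
        then have "w v = 0" using less.hyps[of i q] v v_other less.prems(1) by auto
        then show ?thesis by simp
      next
        case 3
        then have "q \<noteq> p" using v_other v by auto
        then show ?thesis using F_same v 3 by simp
      qed
    qed
    then have "(\<Sum>v\<in>A. w v * F v) = w (diag_shift (B j) p) * F (diag_shift (B j) p)"
      using sum.remove[OF A(1) less.prems(3), of "\<lambda>v. w v * F v"] by simp
    moreover have "(\<Sum>v\<in>A. w v * F v) = 0" by (rule sum_poly2_eq_0[OF orth F(1)])
    ultimately show ?case using F(2) by simp
  qed
  then show ?thesis using assms(5) A(2) unfolding staircase_def by blast
qed

definition line_base :: "nat \<Rightarrow> nat list \<Rightarrow> nat \<Rightarrow> nat \<times> nat" where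
  "line_base z ds j = (if j = 0 then (0, 0) else vvec z ds j)"

lemma Teta_subset_staircase: "Teta n (z, ds) \<subseteq> staircase (line_base z ds) n"
proof
  fix v assume "v \<in> Teta n (z, ds)"
  then obtain j where j: "j \<le> n" "v \<in> Tj n (z, ds) j" unfolding Teta_def by auto
  then obtain p where "v = diag_shift (line_base z ds j) p" "p \<le> n - j"
    by (cases "j = 0") (auto simp: Tj_def line_base_def diag_shift_def)
  then show "v \<in> staircase (line_base z ds) n" using j(1) unfolding staircase_def by blast
qed

lemma zero_notin_Teta:
  assumes "ds ! 0 = 0" and "sum_list ds = n"
  shows "(0, 0) \<notin> Teta n (z, ds)"
proof
  assume "(0, 0) \<in> Teta n (z, ds)"
  then obtain j where j: "j \<le> n" "(0, 0) \<in> Tj n (z, ds) j" unfolding Teta_def by auto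
  then have "1 \<le> j" and "vvec z ds j = (0, 0)" by (auto simp: Tj_def prod_eq_iff split: if_splits)
  then show False using vlen_pos[OF assms _ j(1)] by (simp add: vvec_eq split: if_splits)
qed

lemma diag_line_base:
  assumes "1 \<le> j"
  shows "diag (line_base z ds j) = (if odd (tidx ds j) = (z = 1) then int (vlen ds j) else - int (vlen ds j))"
  using assms by (simp add: line_base_def vvec_eq diag_def)

lemma inj_on_diag_line_base:
  assumes "ds ! 0 = 0" and "sum_list ds = n"
  shows "inj_on (diag \<circ> line_base z ds) {..n}"
proof -
  have neq: "diag (line_base z ds i) \<noteq> diag (line_base z ds j)" if "i < j" "j \<le> n" for i j
  proof (cases "i = 0")
    case True
    then show ?thesis
      using vlen_pos[OF assms _ that(2)] that diag_line_base[of j] by (simp add: line_base_def diag_def)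
  next
    case False
    then have "1 \<le> i" by simp
    show ?thesis
    proof (cases "even (tidx ds i) = even (tidx ds j)")
      case True
      then show ?thesis
        using vlen_less[OF assms \<open>1 \<le> i\<close> that True] diag_line_base[of i] diag_line_base[of j]
          \<open>1 \<le> i\<close> that(1) by auto
    next
      case False
      then show ?thesis
        using vlen_pos[OF assms \<open>1 \<le> i\<close>] vlen_pos[OF assms _ that(2)]
          diag_line_base[of i] diag_line_base[of j] \<open>1 \<le> i\<close> that by auto
    qed
  qed
  show ?thesis
  proof (rule inj_onI)
    fix i j assume "i \<in> {..n}" "j \<in> {..n}" "(diag \<circ> line_base z ds) i = (diag \<circ> line_base z ds) j"
    then show "i = j" using neq[of i j] neq[of j i] by (cases i j rule: linorder_cases) auto
  qed
qed

lemma sum_fun_apply: "(\<Sum>a\<in>A. f a) x = (\<Sum>a\<in>A. f a x)"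
  by (induction A rule: infinite_finite_induct) auto

lemma inj_vbar:
  assumes "1 \<le> n"
  shows "inj (vbar n)"
proof (rule injI)
  fix x y assume eq: "vbar n x = vbar n y"
  have "(1, 0) \<in> Lam n" "(0, 1) \<in> Lam n" using assms by (auto simp: Lam_def)
  then have "fst x = fst y" "snd x = snd y"
    using fun_cong[OF eq, of "(1, 0)"] fun_cong[OF eq, of "(0, 1)"] by (auto simp: vbar_def)
  then show "x = y" by (simp add: prod_eq_iff)
qed

lemma dependent_vbar_imp_orthogonal_weight:
  assumes "1 \<le> n" and "(0, 0) \<notin> S"
    and "module.dependent (\<lambda>(c::complex) f a. c * f a) (vbar n ` S)"
  obtains A and w :: "nat \<times> nat \<Rightarrow> complex" and v where "finite A" "A \<subseteq> insert (0, 0) S"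
    and "orthogonal_poly2 n A w" and "v \<in> A" "w v \<noteq> 0"
proof -
  have "module (\<lambda>(c::complex) (f::nat \<times> nat \<Rightarrow> complex) a. c * f a)"
    by unfold_locales (auto simp: fun_eq_iff algebra_simps)
  from assms(3)[unfolded module.dependent_explicit[OF this]]
  obtain t u where t: "finite t" "t \<subseteq> vbar n ` S" and dep: "(\<Sum>f\<in>t. (\<lambda>a. u f * f a)) = 0"
    and "\<exists>f\<in>t. u f \<noteq> 0"
    by blast
  define T where "T = S \<inter> vbar n -` t"
  have inj: "inj_on (vbar n) T" by (rule inj_on_subset[OF inj_vbar[OF assms(1)]]) simp
  have t_eq: "t = vbar n ` T" using t(2) unfolding T_def by blast
  have "finite T" using t(1) inj unfolding t_eq by (rule finite_imageD)
  have "(0, 0) \<notin> T" using assms(2) unfolding T_def by auto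
  \<comment> \<open>The constant monomial is missing from vbar; the weight at (0,0), where all other
    monomials vanish, makes up for it.\<close>
  define w where "w v = (if v = (0, 0) then - (\<Sum>x\<in>T. u (vbar n x)) else u (vbar n v))" for v
  have orth_Lam: "(\<Sum>x\<in>T. u (vbar n x) * vbar n x \<alpha>) = 0" for \<alpha>
    using fun_cong[OF dep, of \<alpha>] inj unfolding t_eq sum_fun_apply by (simp add: sum.reindex)
  obtain x where x: "x \<in> T" "u (vbar n x) \<noteq> 0"
    using \<open>\<exists>f\<in>t. u f \<noteq> 0\<close> unfolding t_eq by blast
  show thesis
  proof (rule that)
    show "finite (insert (0, 0) T)" "insert (0, 0) T \<subseteq> insert (0, 0) S"
      using \<open>finite T\<close> unfolding T_def by auto
    show "orthogonal_poly2 n (insert (0, 0) T) w"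
      unfolding orthogonal_poly2_def
    proof (intro allI impI)
      fix a b assume "a + b \<le> n"
      have w_T: "w x = u (vbar n x)" if "x \<in> T" for x
        using that \<open>(0, 0) \<notin> T\<close> by (auto simp: w_def)
      have "(\<Sum>v\<in>insert (0, 0) T. w v * (of_nat (fst v choose a) * of_nat (snd v choose b)))
          = w (0, 0) * of_nat ((0 choose a) * (0 choose b))
            + (\<Sum>x\<in>T. u (vbar n x) * (of_nat (fst x choose a) * of_nat (snd x choose b)))"
        using \<open>finite T\<close> \<open>(0, 0) \<notin> T\<close> w_T by simp
      also have "\<dots> = 0"
      proof (cases "a = 0 \<and> b = 0")
        case False
        then have "(a, b) \<in> Lam n" using \<open>a + b \<le> n\<close> by (auto simp: Lam_def)
        then show ?thesis
          using orth_Lam[of "(a, b)"] False by (simp add: vbar_def)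
      qed (simp add: w_def)
      finally show "(\<Sum>v\<in>insert (0, 0) T. w v * (of_nat (fst v choose a) * of_nat (snd v choose b))) = 0" .
    qed
    show "x \<in> insert (0, 0) T" "w x \<noteq> 0" using x \<open>(0, 0) \<notin> T\<close> by (auto simp: w_def)
  qed
qed

theorem proposition2p9:
  fixes n :: nat and eta :: "nat \<times> nat list"
  assumes "1 \<le> n" and "eta \<in> Omega n"
  shows "\<not> module.dependent (\<lambda>(c::complex) (f::nat \<times> nat \<Rightarrow> complex). (\<lambda>a. c * f a)) (Tbar n eta)"
proof
  obtain z ds where eta: "eta = (z, ds)" by (cases eta)
  have d0: "ds ! 0 = 0" and sl: "sum_list ds = n" using assms(2) by (auto simp: eta Omega_def)
  assume "module.dependent (\<lambda>(c::complex) (f::nat \<times> nat \<Rightarrow> complex). (\<lambda>a. c * f a)) (Tbar n eta)"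
  then obtain A and w :: "nat \<times> nat \<Rightarrow> complex" and v
    where A: "finite A" "A \<subseteq> insert (0, 0) (Teta n (z, ds))"
      and orth: "orthogonal_poly2 n A w" and "v \<in> A" "w v \<noteq> 0"
    using dependent_vbar_imp_orthogonal_weight[OF assms(1) zero_notin_Teta[OF d0 sl]]
    unfolding Tbar_def eta by blast
  have "(0, 0) \<in> staircase (line_base z ds) n"
    unfolding staircase_def by (auto simp: line_base_def diag_shift_def intro!: exI[of _ 0])
  then have "A \<subseteq> staircase (line_base z ds) n" using A(2) Teta_subset_staircase by blast
  then have "w v = 0"
    using staircase_unisolvent[OF inj_on_diag_line_base[OF d0 sl] A(1) _ orth \<open>v \<in> A\<close>] by blast
  with \<open>w v \<noteq> 0\<close> show False ..
qed

end
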